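(* Let $X^s,X^t,X^r$ be monomials of $\mathbb{K}[S_M]$. If $X^s\prec X^t$ and $\delta^A(X^r)+\delta^A(X^t)=\delta^A(X^t\cdot X^r)$, then $X^s\cdot X^r\prec X^t\cdot X^r$.
   Context: Let $\mathbb{K}$ be a field of characteristic $0$, $M\subset\mathbb{R}^n$ a polytope with $0\in M$, $S_M\subset\mathbb{Z}^n$ the affine semigroup generated by $M\cap\mathbb{Z}^n$ and $S_M^h\subset\mathbb{Z}^{n+1}$ the one generated by $\{(s,1):s\in M\cap\mathbb{Z}^n\}$, both assumed pointed. $\mathbb{K}[S]$ is the semigroup algebra with monomials $X^s$, $X^sX^t=X^{s+t}$. The affine degree $\delta^A(X^s)$ of a monomial of $\mathbb{K}[S_M]$ is the least $d\in\mathbb{N}$ with $(s,d)\in S_M^h$. Fix a monomial order $<_M$ on $\mathbb{K}[S_M]$ (a well-order on monomials, compatible with multiplication, with $X^0$ minimal). The sparse order $\prec$: $X^s\prec X^r$ iff $\delta^A(X^s)<\delta^A(X^r)$, or $\delta^A(X^s)=\delta^A(X^r)$ and $X^s<_MX^r$. *)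

theory Defs
  imports "HOL-Analysis.Analysis" "HOL-Library.Product_Plus"
begin

inductive_set gen_monoid :: "'a::monoid_add set \<Rightarrow> 'a set" for G :: "'a set" where
  zero: "0 \<in> gen_monoid G"
| add: "g \<in> G \<Longrightarrow> x \<in> gen_monoid G \<Longrightarrow> g + x \<in> gen_monoid G"

definition lattice_points :: "(real ^ 'n) set \<Rightarrow> (int ^ 'n) set" where
  "lattice_points M = {z. (\<chi> i. real_of_int (z $ i)) \<in> M}"

definition S_M :: "(real ^ 'n) set \<Rightarrow> (int ^ 'n) set" where
  "S_M M = gen_monoid (lattice_points M)"

definition S_M_h :: "(real ^ 'n) set \<Rightarrow> ((int ^ 'n) \<times> int) set" where
  "S_M_h M = gen_monoid ((\<lambda>s. (s, 1)) ` lattice_points M)"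

definition pointed :: "'a::ab_group_add set \<Rightarrow> bool" where
  "pointed S \<longleftrightarrow> (\<forall>x. x \<in> S \<and> - x \<in> S \<longrightarrow> x = 0)"

definition affine_degree :: "(real ^ 'n) set \<Rightarrow> int ^ 'n \<Rightarrow> nat" where
  "affine_degree M s = (LEAST d::nat. (s, int d) \<in> S_M_h M)"

definition monomial_order :: "'a::monoid_add set \<Rightarrow> ('a \<Rightarrow> 'a \<Rightarrow> bool) \<Rightarrow> bool" where
  "monomial_order S lt \<longleftrightarrow>
     (\<forall>s\<in>S. \<not> lt s s) \<and>
     (\<forall>s\<in>S. \<forall>t\<in>S. \<forall>u\<in>S. lt s t \<longrightarrow> lt t u \<longrightarrow> lt s u) \<and>
     (\<forall>s\<in>S. \<forall>t\<in>S. s \<noteq> t \<longrightarrow> lt s t \<or> lt t s) \<and>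
     wfP (\<lambda>s t. s \<in> S \<and> t \<in> S \<and> lt s t) \<and>
     (\<forall>s\<in>S. \<forall>t\<in>S. \<forall>r\<in>S. lt s t \<longrightarrow> lt (s + r) (t + r)) \<and>
     (\<forall>s\<in>S. s \<noteq> 0 \<longrightarrow> lt 0 s)"

definition sparse_less :: "(real ^ 'n) set \<Rightarrow> (int ^ 'n \<Rightarrow> int ^ 'n \<Rightarrow> bool) \<Rightarrow> int ^ 'n \<Rightarrow> int ^ 'n \<Rightarrow> bool" where
  "sparse_less M lt s r \<longleftrightarrow>
     affine_degree M s < affine_degree M r \<or>
     (affine_degree M s = affine_degree M r \<and> lt s r)"

end

theory Submission
  imports Defs
begin

text \<open>Subadditivity of the affine degree: concatenating homogeneous representations of
  (s, deg s) and (r, deg r) represents (s + r, deg s + deg r). So if deg (t + r) = deg t + deg r,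
  the degree of s + r can only drop relative to that of t + r, and on equal degrees the
  compatibility of the monomial order with multiplication decides.\<close>

lemma gen_monoid_add_closed:
  fixes G :: "'a::monoid_add set"
  assumes "x \<in> gen_monoid G" "y \<in> gen_monoid G"
  shows "x + y \<in> gen_monoid G"
  using assms
proof (induction x rule: gen_monoid.induct)
  case zero
  then show ?case by simp
next
  case (add g x)
  then show ?case by (simp add: add.assoc gen_monoid.add)
qed

lemma S_M_imp_homogenized:
  assumes "s \<in> S_M M"
  shows "\<exists>d::nat. (s, int d) \<in> S_M_h M"
  using assms unfolding S_M_def S_M_h_def
proof (induction s rule: gen_monoid.induct)
  case zero
  have "(0, int 0) \<in> gen_monoid ((\<lambda>s. (s, 1::int)) ` lattice_points M)"
    using gen_monoid.zero[of "(\<lambda>s. (s, 1::int)) ` lattice_points M"]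
    by (simp add: zero_prod_def)
  then show ?case by blast
next
  case (add g x)
  then obtain d where d: "(x, int d) \<in> gen_monoid ((\<lambda>s. (s, 1::int)) ` lattice_points M)"
    by blast
  have "(g, 1) + (x, int d) \<in> gen_monoid ((\<lambda>s. (s, 1::int)) ` lattice_points M)"
    by (rule gen_monoid.add) (use add.hyps d in auto)
  then have "(g + x, int (Suc d)) \<in> gen_monoid ((\<lambda>s. (s, 1::int)) ` lattice_points M)"
    by simp
  then show ?case by blast
qed

lemma affine_degree_mem_S_M_h:
  assumes "s \<in> S_M M"
  shows "(s, int (affine_degree M s)) \<in> S_M_h M"
  using S_M_imp_homogenized[OF assms] unfolding affine_degree_def by (rule LeastI_ex)

lemma affine_degree_add_le:
  assumes "s \<in> S_M M" "r \<in> S_M M"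
  shows "affine_degree M (s + r) \<le> affine_degree M s + affine_degree M r"
proof -
  have "(s, int (affine_degree M s)) + (r, int (affine_degree M r)) \<in> S_M_h M"
    using affine_degree_mem_S_M_h[OF assms(1)] affine_degree_mem_S_M_h[OF assms(2)]
    unfolding S_M_h_def by (rule gen_monoid_add_closed)
  then have "(s + r, int (affine_degree M s + affine_degree M r)) \<in> S_M_h M"
    by simp
  then show ?thesis
    unfolding affine_degree_def by (rule Least_le)
qed

theorem mainTheorem13:
  fixes M :: "(real ^ 'n) set" and lt :: "int ^ 'n \<Rightarrow> int ^ 'n \<Rightarrow> bool"
    and s t r :: "int ^ 'n"
  assumes "polytope M" and "0 \<in> M"
    and "pointed (S_M M)" and "pointed (S_M_h M)"
    and "monomial_order (S_M M) lt"
    and "s \<in> S_M M" and "t \<in> S_M M" and "r \<in> S_M M"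
    and "sparse_less M lt s t"
    and "affine_degree M r + affine_degree M t = affine_degree M (t + r)"
  shows "sparse_less M lt (s + r) (t + r)"
proof -
  have compatible: "lt s t \<Longrightarrow> lt (s + r) (t + r)"
    using assms(5-8) unfolding monomial_order_def by blast
  have "affine_degree M (s + r) \<le> affine_degree M s + affine_degree M r"
    using affine_degree_add_le assms(6,8) by blast
  with assms(9,10) compatible show ?thesis
    unfolding sparse_less_def by auto
qed

end
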